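(* Let $V$ be a finite nonempty set, let $Z_V=(Z_i : i\in V)$ be a vector of discrete random variables with joint distribution $P_{Z_V}$, and let $H\colon 2^V\to\mathbb{R}$ be the entropy function $H(X)=H(Z_X)$ (Shannon entropy of $Z_X=(Z_i:i\in X)$), with $H(\emptyset)=0$. Let $w_V=(w_i:i\in V)\in\mathbb{R}_{>0}^{|V|}$ be a positive weight vector. Then the output $r^*_V$ of the call $\mathrm{SPLIT}(V,H,w_V)$ (the recursive procedure described in the context) is the minimizer of $$\min\Big\{\sum_{i\in V}\frac{r_i^2}{w_i} \;:\; r_V\in \mathcal{R}(V,H)\Big\},$$ where $\mathcal{R}(V,H)$ is the Slepian–Wolf region defined in the context.
   Context: For a vector $r_V=(r_i:i\in V)\in\mathbb{R}^{|V|}$ write $r(X)=\sum_{i\in X}r_i$ for $X\subseteq V$ (with $r(\emptyset)=0$), and similarly $w(X)=\sum_{i\in X}w_i$. For a finite set $C$ and a set function $f\colon 2^C\to\mathbb{R}$ with $f(\emptyset)=0$, define $\mathcal{R}(C,f)=\{r_C\in\mathbb{R}^{|C|} : r(X)\le f(X)\ \forall X\subseteq C,\ r(C)=f(C)\}$. In particular the Slepian–Wolf region is $\mathcal{R}(V,H)=\{r_V : r(X)\le H(X)\ \forall X\subseteq V,\ r(V)=H(V)\}$, equivalently the set of $r_V$ with $r(X)\ge H(X\mid V\setminus X)=H(V)-H(V\setminus X)$ for all $X\subseteq V$ and $r(V)=H(V)$. (The entropy function $H$ is submodular.) The procedure $\mathrm{SPLIT}(C,f,w_C)$, taking a nonempty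 finite set $C$, an oracle for a set function $f$ on subsets of $C$, and a positive weight vector $w_C$, is defined recursively as follows: 1. Set $\lambda = f(C)/w(C)$. 2. Let $\hat X$ be the maximal (inclusion-wise largest) minimizer of $\min\{f(X)-\lambda w(X) : X\subseteq C\}$. 3. If $\hat X = C$, return $r^*_C=\lambda w_C$ (i.e. $r^*_i=\lambda w_i$ for $i\in C$). 4. Otherwise: set $r^*_{\hat X}=\mathrm{SPLIT}(\hat X, f, w_{\hat X})$ (with $f$ restricted to subsets of $\hat X$); define $g\colon 2^{C\setminus\hat X}\to\mathbb{R}$ by $g(X)=f(X\sqcup\hat X)-f(\hat X)\big(\tfrac{w(X)}{w(\hat X)}+1\big)$ for $X\subseteq C\setminus\hat X$; set $r^*_{C\setminus\hat X}=\tfrac{f(\hat X)}{w(\hat X)}\,w_{C\setminus\hat X}+\mathrm{SPLIT}(C\setminus\hat X, g, w_{C\setminus\hat X})$; and return $r^*_C=r^*_{\hat X}\oplus r^*_{C\setminus\hat X}$, the vector on $C$ whose restrictions to $\hat X$ and $C\setminus\hat X$ are $r^*_{\hat X}$ and $r^*_{C\setminus\hat X}$ respectively. *)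

theory Defs
  imports "HOL-Probability.Probability_Mass_Function"
begin

definition shannon_entropy :: "'b pmf \<Rightarrow> real" where
  "shannon_entropy q = - (\<Sum>x\<in>set_pmf q. pmf q x * log 2 (pmf q x))"

(* Entropy function H(X) = H(Z_X), where P is the joint distribution of Z_V
   (a random vector z :: 'i \<Rightarrow> 'a), and Z_X is the restriction of z to X *)
definition entropy_fun :: "('i \<Rightarrow> 'a) pmf \<Rightarrow> 'i set \<Rightarrow> real" where
  "entropy_fun P X = shannon_entropy (map_pmf (\<lambda>z. restrict z X) P)"

definition setsum :: "('i \<Rightarrow> real) \<Rightarrow> 'i set \<Rightarrow> real" where
  "setsum r X = (\<Sum>i\<in>X. r i)"

definition region :: "'i set \<Rightarrow> ('i set \<Rightarrow> real) \<Rightarrow> ('i \<Rightarrow> real) set" where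
  "region C f = {r. (\<forall>X. X \<subseteq> C \<longrightarrow> setsum r X \<le> f X) \<and> setsum r C = f C}"

definition max_minimizer :: "'i set \<Rightarrow> ('i set \<Rightarrow> real) \<Rightarrow> 'i set" where
  "max_minimizer C h = (THE X. X \<subseteq> C \<and> (\<forall>Y. Y \<subseteq> C \<longrightarrow> h X \<le> h Y)
                          \<and> (\<forall>Y. Y \<subseteq> C \<and> h Y = h X \<longrightarrow> Y \<subseteq> X))"

(* SPLIT with an explicit recursion-depth bound (fuel); each recursive call is on
   a strictly smaller set, so fuel = card C suffices. Vectors are functions
   'i \<Rightarrow> real; only their values on C are meaningful. *)
fun split_aux :: "nat \<Rightarrow> 'i set \<Rightarrow> ('i set \<Rightarrow> real) \<Rightarrow> ('i \<Rightarrow> real) \<Rightarrow> ('i \<Rightarrow> real)" where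
  "split_aux 0 C f w = (\<lambda>i. 0)"
| "split_aux (Suc n) C f w =
    (let lam = f C / setsum w C;
         Xh = max_minimizer C (\<lambda>X. f X - lam * setsum w X)
     in if Xh = C then (\<lambda>i. lam * w i)
        else
          (let r1 = split_aux n Xh f w;
               g = (\<lambda>X. f (X \<union> Xh) - f Xh * (setsum w X / setsum w Xh + 1));
               r2 = (\<lambda>i. f Xh / setsum w Xh * w i + split_aux n (C - Xh) g w i)
           in (\<lambda>i. if i \<in> Xh then r1 i else r2 i)))"

definition SPLIT :: "'i set \<Rightarrow> ('i set \<Rightarrow> real) \<Rightarrow> ('i \<Rightarrow> real) \<Rightarrow> ('i \<Rightarrow> real)" where
  "SPLIT C f w = split_aux (card C) C f w"

end

theory Submission
  imports Defs
begin

text \<open>Entropy is submodular (conditional mutual information is nonnegative) and vanishes on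
  the empty set. For such an \<open>f\<close>, SPLIT returns a vector \<open>r \<in> \<R>(V, f)\<close> all of whose
  sublevel sets \<open>L = {i. r\<^sub>i / w\<^sub>i \<le> c}\<close> are tight, \<open>r(L) = f(L)\<close>: on the maximal
  minimizer \<open>X\<close> of \<open>f - \<lambda> w\<close> the recursion produces rates per unit weight at most \<open>\<lambda>\<close>, and
  on \<open>V - X\<close>, where it works with the contraction of \<open>f\<close>, rates above \<open>\<lambda>\<close>. Tight
  sublevel sets certify optimality: for \<open>r' \<in> \<R>(V, f)\<close> the difference \<open>d = r' - r\<close> has
  nonpositive sums over them and total sum 0, so summation by parts gives
  \<open>\<Sum> (r\<^sub>i / w\<^sub>i) d\<^sub>i \<ge> 0\<close> and hence
  \<open>\<Sum> r'\<^sub>i\<^sup>2 / w\<^sub>i \<ge> \<Sum> r\<^sub>i\<^sup>2 / w\<^sub>i + \<Sum> d\<^sub>i\<^sup>2 / w\<^sub>i\<close>.\<close>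

section \<open>Submodularity of the entropy function\<close>

definition marginal :: "('i \<Rightarrow> 'a) pmf \<Rightarrow> 'i set \<Rightarrow> ('i \<Rightarrow> 'a) \<Rightarrow> real" where
  "marginal P X z = sum (pmf P) {x \<in> set_pmf P. \<forall>i\<in>X. x i = z i}"

lemma marginal_eq_sum_if:
  "finite (set_pmf P) \<Longrightarrow>
    marginal P X z = (\<Sum>x\<in>set_pmf P. if \<forall>i\<in>X. x i = z i then pmf P x else 0)"
  unfolding marginal_def by (rule sum.inter_filter)

lemma marginal_cong: "\<forall>i\<in>X. x i = z i \<Longrightarrow> marginal P X x = marginal P X z"
  unfolding marginal_def by simp

lemma marginal_pos:
  assumes "finite (set_pmf P)" "z \<in> set_pmf P"
  shows "marginal P X z > 0"
proof -
  have "pmf P z \<le> marginal P X z"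
    unfolding marginal_def by (rule member_le_sum) (use assms in auto)
  moreover have "pmf P z > 0" using assms(2) by (simp add: pmf_positive)
  ultimately show ?thesis by linarith
qed

lemma marginal_empty:
  "finite (set_pmf P) \<Longrightarrow> marginal P {} z = 1"
  unfolding marginal_def by (simp add: sum_pmf_eq_1)

lemma restrict_eq_restrict_iff: "restrict x X = restrict z X \<longleftrightarrow> (\<forall>i\<in>X. x i = z i)"
  unfolding restrict_def fun_eq_iff by metis

lemma pmf_map_restrict:
  assumes "finite (set_pmf P)"
  shows "pmf (map_pmf (\<lambda>x. restrict x X) P) (restrict z X) = marginal P X z"
proof -
  let ?A = "(\<lambda>x. restrict x X) -` {restrict z X}"
  have "pmf (map_pmf (\<lambda>x. restrict x X) P) (restrict z X) = measure P (?A \<inter> set_pmf P)"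
    by (simp add: pmf_map measure_Int_set_pmf)
  also have "\<dots> = sum (pmf P) (?A \<inter> set_pmf P)"
    using assms by (simp add: measure_measure_pmf_finite)
  also have "?A \<inter> set_pmf P = {x \<in> set_pmf P. \<forall>i\<in>X. x i = z i}"
    by (auto simp: restrict_eq_restrict_iff)
  finally show ?thesis
    unfolding marginal_def .
qed

lemma entropy_fun_eq_marginal:
  assumes fin: "finite (set_pmf P)"
  shows "entropy_fun P X = - (\<Sum>z\<in>set_pmf P. pmf P z * log 2 (marginal P X z))"
proof -
  define g where "g = (\<lambda>z :: 'a \<Rightarrow> 'b. restrict z X)"
  define Q where "Q = map_pmf g P"
  have class_sum: "pmf Q u * log 2 (pmf Q u)
      = (\<Sum>z\<in>{x \<in> set_pmf P. g x = u}. pmf P z * log 2 (marginal P X z))"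
    if "u \<in> g ` set_pmf P" for u
  proof -
    from that obtain z where u: "u = g z" by blast
    have Q_marginal: "pmf Q (g x) = marginal P X x" for x
      unfolding Q_def g_def by (rule pmf_map_restrict[OF fin])
    have "pmf Q u = sum (pmf P) {x \<in> set_pmf P. g x = u}"
      unfolding u Q_marginal unfolding marginal_def g_def restrict_eq_restrict_iff ..
    then have "pmf Q u * log 2 (pmf Q u) = (\<Sum>x\<in>{x \<in> set_pmf P. g x = u}. pmf P x * log 2 (pmf Q u))"
      by (simp only: sum_distrib_right)
    also have "\<dots> = (\<Sum>x\<in>{x \<in> set_pmf P. g x = u}. pmf P x * log 2 (marginal P X x))"
      by (rule sum.cong) (auto simp: Q_marginal[symmetric])
    finally show ?thesis .
  qed
  have "(\<Sum>u\<in>set_pmf Q. pmf Q u * log 2 (pmf Q u))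
      = (\<Sum>u\<in>g ` set_pmf P. \<Sum>z\<in>{x \<in> set_pmf P. g x = u}. pmf P z * log 2 (marginal P X z))"
    unfolding Q_def set_map_pmf by (rule sum.cong[OF refl class_sum[unfolded Q_def]])
  also have "\<dots> = (\<Sum>z\<in>set_pmf P. pmf P z * log 2 (marginal P X z))"
    by (rule sum.image_gen[OF fin, symmetric])
  finally show ?thesis
    unfolding entropy_fun_def shannon_entropy_def Q_def g_def by (rule arg_cong[where f = uminus])
qed

lemma entropy_fun_empty: "finite (set_pmf P) \<Longrightarrow> entropy_fun P {} = 0"
  by (simp add: entropy_fun_eq_marginal marginal_empty)

lemma weighted_log_sum_nonpos:
  fixes p R :: "'z \<Rightarrow> real"
  assumes "1 < b" and "\<forall>z\<in>S. 0 \<le> p z" and "\<forall>z\<in>S. 0 < R z"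
    and "(\<Sum>z\<in>S. p z * R z) \<le> sum p S"
  shows "(\<Sum>z\<in>S. p z * log b (R z)) \<le> 0"
proof -
  have "p z * log b (R z) \<le> p z * ((R z - 1) / ln b)" if "z \<in> S" for z
  proof -
    have "ln (R z) \<le> R z - 1"
      using assms(3) that by (simp add: ln_le_minus_one)
    then have "log b (R z) \<le> (R z - 1) / ln b"
      using assms(1) by (simp add: log_def divide_right_mono)
    then show ?thesis
      by (rule mult_left_mono) (use assms(2) that in blast)
  qed
  then have "(\<Sum>z\<in>S. p z * log b (R z)) \<le> (\<Sum>z\<in>S. p z * ((R z - 1) / ln b))"
    by (rule sum_mono)
  also have "\<dots> = ((\<Sum>z\<in>S. p z * R z) - sum p S) / ln b"
    by (simp add: sum_divide_distrib[symmetric] sum_subtractf right_diff_distrib)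
  also have "\<dots> \<le> 0"
    using assms(1,4) by (simp add: divide_nonpos_pos)
  finally show ?thesis .
qed

lemma sum_pmf_div_marginal_class:
  assumes "finite (set_pmf P)" and "z0 \<in> set_pmf P"
  shows "(\<Sum>z\<in>set_pmf P. if \<forall>i\<in>X. z i = z0 i then pmf P z / marginal P X z else 0) = 1"
proof -
  have "(\<Sum>z\<in>set_pmf P. if \<forall>i\<in>X. z i = z0 i then pmf P z / marginal P X z else 0)
      = (\<Sum>z\<in>set_pmf P. if \<forall>i\<in>X. z i = z0 i then pmf P z else 0) / marginal P X z0"
    unfolding sum_divide_distrib by (rule sum.cong) (auto simp: marginal_cong)
  also have "\<dots> = 1"
    using marginal_pos[OF assms, of X] by (simp add: marginal_eq_sum_if[OF assms(1), symmetric])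
  finally show ?thesis .
qed

lemma sum_consistent_div_marginal_le:
  assumes fin: "finite (set_pmf P)"
  shows "(\<Sum>z\<in>set_pmf P. if (\<forall>i\<in>X. x i = z i) \<and> (\<forall>i\<in>Y. y i = z i)
            then pmf P z / marginal P (X \<union> Y) z else 0)
         \<le> (if \<forall>i\<in>X \<inter> Y. y i = x i then 1 else 0)"
proof (cases "\<exists>z0\<in>set_pmf P. (\<forall>i\<in>X. x i = z0 i) \<and> (\<forall>i\<in>Y. y i = z0 i)")
  case True
  then obtain z0 where z0: "z0 \<in> set_pmf P" "\<forall>i\<in>X. x i = z0 i" "\<forall>i\<in>Y. y i = z0 i" by blast
  have "((\<forall>i\<in>X. x i = z i) \<and> (\<forall>i\<in>Y. y i = z i)) \<longleftrightarrow> (\<forall>i\<in>X \<union> Y. z i = z0 i)" for z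
    using z0 by auto
  then have "(\<Sum>z\<in>set_pmf P. if (\<forall>i\<in>X. x i = z i) \<and> (\<forall>i\<in>Y. y i = z i)
      then pmf P z / marginal P (X \<union> Y) z else 0) = 1"
    using sum_pmf_div_marginal_class[OF fin z0(1), of "X \<union> Y"] by simp
  moreover have "\<forall>i\<in>X \<inter> Y. y i = x i"
    using z0 by auto
  ultimately show ?thesis by simp
next
  case False
  then have "(\<Sum>z\<in>set_pmf P. if (\<forall>i\<in>X. x i = z i) \<and> (\<forall>i\<in>Y. y i = z i)
      then pmf P z / marginal P (X \<union> Y) z else 0) = 0"
    by (intro sum.neutral) auto
  then show ?thesis by simp
qed

text \<open>The left-hand side is the total mass, on the support of \<open>Z\<^sub>X\<^sub>\<union>\<^sub>Y\<close>, of the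
  distribution that draws \<open>Z\<^sub>X\<close> first and then \<open>Z\<^sub>Y\<close> conditionally on \<open>Z\<^sub>X\<^sub>\<inter>\<^sub>Y\<close> alone.\<close>

lemma sum_marginal_ratio_le_1:
  assumes fin: "finite (set_pmf P)"
  shows "(\<Sum>z\<in>set_pmf P. pmf P z *
           (marginal P X z * marginal P Y z / (marginal P (X \<union> Y) z * marginal P (X \<inter> Y) z))) \<le> 1"
proof -
  define S where "S = set_pmf P"
  define p where "p = pmf P"
  define m where "m = marginal P"
  define c where "c x y z = (if (\<forall>i\<in>X. x i = z i) \<and> (\<forall>i\<in>Y. y i = z i)
      then p z / m (X \<union> Y) z else 0)" for x y z
  have m_sum: "m Z z = (\<Sum>x\<in>S. if \<forall>i\<in>Z. x i = z i then p x else 0)" for Z z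
    unfolding m_def S_def p_def by (rule marginal_eq_sum_if[OF fin])
  have term_eq: "p z * ((if \<forall>i\<in>X. x i = z i then p x else 0) * (if \<forall>i\<in>Y. y i = z i then p y else 0))
      / (m (X \<union> Y) z * m (X \<inter> Y) z) = p x * p y / m (X \<inter> Y) x * c x y z" for x y z
  proof (cases "(\<forall>i\<in>X. x i = z i) \<and> (\<forall>i\<in>Y. y i = z i)")
    case True
    then have "m (X \<inter> Y) x = m (X \<inter> Y) z"
      unfolding m_def by (intro marginal_cong) auto
    with True show ?thesis by (simp add: c_def ac_simps)
  qed (auto simp: c_def)
  have "(\<Sum>z\<in>S. p z * (m X z * m Y z / (m (X \<union> Y) z * m (X \<inter> Y) z)))
      = (\<Sum>z\<in>S. \<Sum>x\<in>S. \<Sum>y\<in>S. p z * ((if \<forall>i\<in>X. x i = z i then p x else 0)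
          * (if \<forall>i\<in>Y. y i = z i then p y else 0)) / (m (X \<union> Y) z * m (X \<inter> Y) z))"
    unfolding m_sum[of X] m_sum[of Y] sum_product by (simp add: sum_distrib_left sum_divide_distrib)
  also have "\<dots> = (\<Sum>z\<in>S. \<Sum>x\<in>S. \<Sum>y\<in>S. p x * p y / m (X \<inter> Y) x * c x y z)"
    unfolding term_eq ..
  also have "\<dots> = (\<Sum>x\<in>S. \<Sum>y\<in>S. p x * p y / m (X \<inter> Y) x * (\<Sum>z\<in>S. c x y z))"
    unfolding sum_distrib_left by (subst sum.swap) (intro sum.cong refl sum.swap)
  also have "\<dots> \<le> (\<Sum>x\<in>S. \<Sum>y\<in>S. p x * p y / m (X \<inter> Y) x * (if \<forall>i\<in>X \<inter> Y. y i = x i then 1 else 0))"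
    unfolding c_def S_def p_def m_def
    by (intro sum_mono mult_left_mono sum_consistent_div_marginal_le[OF fin])
      (simp add: marginal_def sum_nonneg)
  also have "\<dots> = (\<Sum>x\<in>S. p x / m (X \<inter> Y) x * m (X \<inter> Y) x)"
    unfolding m_sum[of "X \<inter> Y"] sum_distrib_left by (intro sum.cong refl) simp
  also have "\<dots> = sum p S"
  proof (intro sum.cong refl)
    fix x assume "x \<in> S"
    then have "m (X \<inter> Y) x > 0"
      unfolding S_def m_def by (rule marginal_pos[OF fin])
    then show "p x / m (X \<inter> Y) x * m (X \<inter> Y) x = p x" by simp
  qed
  also have "\<dots> = 1"
    unfolding p_def S_def by (rule sum_pmf_eq_1[OF fin order_refl])
  finally show ?thesis unfolding S_def p_def m_def .
qed

lemma entropy_fun_submodular: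
  assumes fin: "finite (set_pmf P)"
  shows "entropy_fun P (X \<union> Y) + entropy_fun P (X \<inter> Y) \<le> entropy_fun P X + entropy_fun P Y"
proof -
  let ?m = "marginal P"
  define R where "R z = ?m X z * ?m Y z / (?m (X \<union> Y) z * ?m (X \<inter> Y) z)" for z
  have pos: "?m Z z > 0" if "z \<in> set_pmf P" for Z z
    using marginal_pos[OF fin that] .
  have "(\<Sum>z\<in>set_pmf P. pmf P z * log 2 (R z)) \<le> 0"
  proof (rule weighted_log_sum_nonpos)
    show "(\<Sum>z\<in>set_pmf P. pmf P z * R z) \<le> sum (pmf P) (set_pmf P)"
      using sum_marginal_ratio_le_1[OF fin] by (simp add: R_def sum_pmf_eq_1[OF fin])
  qed (auto simp: R_def pos)
  moreover have "log 2 (R z)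
      = log 2 (?m X z) + log 2 (?m Y z) - log 2 (?m (X \<union> Y) z) - log 2 (?m (X \<inter> Y) z)"
    if "z \<in> set_pmf P" for z
    using pos[OF that, of X] pos[OF that, of Y] pos[OF that, of "X \<union> Y"] pos[OF that, of "X \<inter> Y"]
    by (simp add: R_def log_mult log_divide)
  ultimately show ?thesis
    unfolding entropy_fun_eq_marginal[OF fin]
    by (simp add: distrib_left right_diff_distrib sum.distrib sum_subtractf cong: sum.cong)
qed

section \<open>Submodular functions and the SPLIT recursion\<close>

lemma setsum_eq_sum [simp]: "setsum r X = sum r X"
  by (simp add: setsum_def)

lemma region_iff: "r \<in> region C f \<longleftrightarrow> (\<forall>X \<subseteq> C. sum r X \<le> f X) \<and> sum r C = f C"
  by (simp add: region_def)

lemma regionD: "r \<in> region C f \<Longrightarrow> X \<subseteq> C \<Longrightarrow> sum r X \<le> f X"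
  unfolding region_iff by blast

lemma region_sum_eq: "r \<in> region C f \<Longrightarrow> sum r C = f C"
  unfolding region_iff by blast

definition submodular_on :: "'i set \<Rightarrow> ('i set \<Rightarrow> real) \<Rightarrow> bool" where
  "submodular_on C f \<longleftrightarrow> (\<forall>X Y. X \<subseteq> C \<longrightarrow> Y \<subseteq> C \<longrightarrow> f (X \<union> Y) + f (X \<inter> Y) \<le> f X + f Y)"

lemma submodular_onD:
  "submodular_on C f \<Longrightarrow> X \<subseteq> C \<Longrightarrow> Y \<subseteq> C \<Longrightarrow> f (X \<union> Y) + f (X \<inter> Y) \<le> f X + f Y"
  unfolding submodular_on_def by blast

lemma submodular_on_subset: "submodular_on C f \<Longrightarrow> D \<subseteq> C \<Longrightarrow> submodular_on D f"
  unfolding submodular_on_def by blast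

lemma submodular_on_diff_scaled_sum:
  assumes "finite C" and "submodular_on C f"
  shows "submodular_on C (\<lambda>X. f X - a * sum w X)"
  unfolding submodular_on_def
proof (intro allI impI)
  fix X Y assume XY: "X \<subseteq> C" "Y \<subseteq> C"
  then have "sum w (X \<union> Y) + sum w (X \<inter> Y) = sum w X + sum w Y"
    using assms(1) by (metis finite_subset sum.union_inter)
  then have "a * sum w (X \<union> Y) + a * sum w (X \<inter> Y) = a * sum w X + a * sum w Y"
    by (metis distrib_left)
  with submodular_onD[OF assms(2) XY] show
    "f (X \<union> Y) - a * sum w (X \<union> Y) + (f (X \<inter> Y) - a * sum w (X \<inter> Y))
       \<le> f X - a * sum w X + (f Y - a * sum w Y)"
    by linarith
qed

definition contraction :: "('i set \<Rightarrow> real) \<Rightarrow> 'i set \<Rightarrow> 'i set \<Rightarrow> real" where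
  "contraction f X Y = f (Y \<union> X) - f X"

lemma submodular_on_contraction:
  assumes "submodular_on C f" and "X \<subseteq> C"
  shows "submodular_on (C - X) (contraction f X)"
  unfolding submodular_on_def
proof (intro allI impI)
  fix Y Z assume "Y \<subseteq> C - X" "Z \<subseteq> C - X"
  then have "f ((Y \<union> X) \<union> (Z \<union> X)) + f ((Y \<union> X) \<inter> (Z \<union> X)) \<le> f (Y \<union> X) + f (Z \<union> X)"
    using assms by (intro submodular_onD) auto
  moreover have "(Y \<union> X) \<union> (Z \<union> X) = (Y \<union> Z) \<union> X" "(Y \<union> X) \<inter> (Z \<union> X) = (Y \<inter> Z) \<union> X"
    by auto
  ultimately show "contraction f X (Y \<union> Z) + contraction f X (Y \<inter> Z)
      \<le> contraction f X Y + contraction f X Z"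
    unfolding contraction_def by simp
qed

lemma submodular_on_minimizer_Un:
  assumes "submodular_on C h" and "X \<subseteq> C" and "Y \<subseteq> C"
    and "\<And>Z. Z \<subseteq> C \<Longrightarrow> h X \<le> h Z" and "h Y = h X"
  shows "h (X \<union> Y) = h X"
proof -
  have "h (X \<union> Y) + h (X \<inter> Y) \<le> h X + h Y"
    using submodular_onD[OF assms(1-3)] .
  moreover have "h X \<le> h (X \<inter> Y)" "h X \<le> h (X \<union> Y)"
    using assms(2,3) by (auto intro: assms(4))
  ultimately show ?thesis
    using assms(5) by linarith
qed

lemma ex_greatest_minimizer:
  assumes "finite C" and "submodular_on C h"
  shows "\<exists>X. X \<subseteq> C \<and> (\<forall>Y. Y \<subseteq> C \<longrightarrow> h X \<le> h Y) \<and> (\<forall>Y. Y \<subseteq> C \<and> h Y = h X \<longrightarrow> Y \<subseteq> X)"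
proof -
  obtain X1 where X1: "X1 \<subseteq> C" "\<And>Y. Y \<subseteq> C \<Longrightarrow> h X1 \<le> h Y"
    using ex_is_arg_min_if_finite[of "Pow C" h] assms(1) by (auto simp: is_arg_min_linorder)
  define M where "M = {X. X \<subseteq> C \<and> h X = h X1}"
  have "finite M"
    unfolding M_def using assms(1) by (auto intro: rev_finite_subset[of "Pow C"])
  moreover have "X1 \<in> M"
    unfolding M_def using X1 by simp
  ultimately obtain X0 where X0: "X0 \<in> M" "\<And>Y. Y \<in> M \<Longrightarrow> X0 \<subseteq> Y \<Longrightarrow> X0 = Y"
    using finite_has_maximal[of M] by blast
  have X0C: "X0 \<subseteq> C" and hX0: "h X0 = h X1"
    using X0(1) by (auto simp: M_def)
  have "Y \<subseteq> X0" if "Y \<subseteq> C" "h Y = h X0" for Y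
  proof -
    have "h (X0 \<union> Y) = h X0"
      using submodular_on_minimizer_Un[OF assms(2) X0C that(1)] X1(2) hX0 that(2) by simp
    then have "X0 = X0 \<union> Y"
      using X0C that(1) hX0 by (intro X0(2)) (auto simp: M_def)
    then show ?thesis by blast
  qed
  then show ?thesis
    using X0C X1(2) hX0 by (intro exI[of _ X0]) auto
qed

text \<open>Submodularity makes the minimizers of \<open>h\<close> closed under union, so an
  inclusion-maximal minimizer contains all the others and is unique.\<close>

lemma max_minimizer:
  assumes "finite C" and "submodular_on C h"
  shows "max_minimizer C h \<subseteq> C"
    and "\<And>Y. Y \<subseteq> C \<Longrightarrow> h (max_minimizer C h) \<le> h Y"
    and "\<And>Y. Y \<subseteq> C \<Longrightarrow> h Y = h (max_minimizer C h) \<Longrightarrow> Y \<subseteq> max_minimizer C h"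
proof -
  define Q where "Q = (\<lambda>X. X \<subseteq> C \<and> (\<forall>Y. Y \<subseteq> C \<longrightarrow> h X \<le> h Y)
    \<and> (\<forall>Y. Y \<subseteq> C \<and> h Y = h X \<longrightarrow> Y \<subseteq> X))"
  obtain X0 where "Q X0"
    using ex_greatest_minimizer[OF assms] unfolding Q_def by blast
  moreover have "X = X0" if "Q X" for X
  proof -
    have "h X \<le> h X0" "h X0 \<le> h X"
      using that \<open>Q X0\<close> unfolding Q_def by blast+
    then have "h X = h X0"
      by simp
    then have "X0 \<subseteq> X" "X \<subseteq> X0"
      using that \<open>Q X0\<close> unfolding Q_def by simp_all
    then show ?thesis by blast
  qed
  ultimately have "Q (THE X. Q X)"
    by (rule theI)
  moreover have "max_minimizer C h = (THE X. Q X)"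
    unfolding max_minimizer_def Q_def ..
  ultimately show "max_minimizer C h \<subseteq> C"
    and "\<And>Y. Y \<subseteq> C \<Longrightarrow> h (max_minimizer C h) \<le> h Y"
    and "\<And>Y. Y \<subseteq> C \<Longrightarrow> h Y = h (max_minimizer C h) \<Longrightarrow> Y \<subseteq> max_minimizer C h"
    unfolding Q_def by auto
qed

lemma sum_add_scaled:
  fixes w r :: "'i \<Rightarrow> real"
  shows "(\<Sum>i\<in>X. a * w i + r i) = a * sum w X + sum r X"
  by (simp add: sum.distrib flip: sum_distrib_left)

lemma region_add_scaled:
  assumes "r \<in> region D (\<lambda>Y. g Y - a * sum w Y)"
  shows "(\<lambda>i. a * w i + r i) \<in> region D g"
  using assms unfolding region_iff sum_add_scaled by auto

lemma sum_if_mem: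
  assumes "finite Y"
  shows "(\<Sum>i\<in>Y. if i \<in> X then r1 i else r2 i) = sum r1 (Y \<inter> X) + sum r2 (Y - X)"
  using sum.If_cases[OF assms, of "\<lambda>i. i \<in> X" r1 r2] by (simp add: Diff_eq)

lemma region_glue:
  assumes "finite C" and "submodular_on C f" and "X \<subseteq> C"
    and "r1 \<in> region X f" and "r2 \<in> region (C - X) (contraction f X)"
  shows "(\<lambda>i. if i \<in> X then r1 i else r2 i) \<in> region C f"
  unfolding region_iff
proof (intro conjI allI impI)
  fix Y assume "Y \<subseteq> C"
  then have "(\<Sum>i\<in>Y. if i \<in> X then r1 i else r2 i) = sum r1 (Y \<inter> X) + sum r2 (Y - X)"
    using assms(1) by (intro sum_if_mem) (rule finite_subset)
  also have "\<dots> \<le> f (Y \<inter> X) + contraction f X (Y - X)"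
  proof (rule add_mono)
    show "sum r1 (Y \<inter> X) \<le> f (Y \<inter> X)"
      by (rule regionD[OF assms(4)]) blast
    show "sum r2 (Y - X) \<le> contraction f X (Y - X)"
      by (rule regionD[OF assms(5)]) (use \<open>Y \<subseteq> C\<close> in blast)
  qed
  also have "\<dots> = f (Y \<inter> X) + f (Y \<union> X) - f X"
    unfolding contraction_def by (simp add: Un_Diff_cancel2)
  also have "\<dots> \<le> f Y"
    using submodular_onD[OF assms(2) \<open>Y \<subseteq> C\<close> assms(3)] by simp
  finally show "(\<Sum>i\<in>Y. if i \<in> X then r1 i else r2 i) \<le> f Y" .
next
  have "(\<Sum>i\<in>C. if i \<in> X then r1 i else r2 i) = sum r1 X + sum r2 (C - X)"
    using sum_if_mem[OF assms(1), of X r1 r2] by (simp add: Int_absorb1[OF assms(3)])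
  also have "\<dots> = f C"
    using region_sum_eq[OF assms(4)] region_sum_eq[OF assms(5)] assms(3)
    unfolding contraction_def by (simp add: Un_absorb2)
  finally show "(\<Sum>i\<in>C. if i \<in> X then r1 i else r2 i) = f C" .
qed

definition tight_levels :: "'i set \<Rightarrow> ('i set \<Rightarrow> real) \<Rightarrow> ('i \<Rightarrow> real) \<Rightarrow> ('i \<Rightarrow> real) \<Rightarrow> bool" where
  "tight_levels C f r w \<longleftrightarrow> (\<forall>c. sum r {i \<in> C. r i / w i \<le> c} = f {i \<in> C. r i / w i \<le> c})"

lemma tight_levelsD:
  "tight_levels C f r w \<Longrightarrow> sum r {i \<in> C. r i / w i \<le> c} = f {i \<in> C. r i / w i \<le> c}"
  unfolding tight_levels_def by blast

lemma tight_levels_add_scaled: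
  assumes "\<forall>i\<in>D. w i > 0" and "tight_levels D (\<lambda>Y. g Y - a * sum w Y) r w"
  shows "tight_levels D g (\<lambda>i. a * w i + r i) w"
  unfolding tight_levels_def
proof
  fix c
  let ?L = "{i \<in> D. (a * w i + r i) / w i \<le> c}"
  have "?L = {i \<in> D. r i / w i \<le> c - a}"
    using assms(1) by (auto simp: add_divide_distrib)
  then show "(\<Sum>i\<in>?L. a * w i + r i) = g ?L"
    using tight_levelsD[OF assms(2), of "c - a"] by (simp add: sum_add_scaled)
qed

lemma tight_levels_glue:
  assumes "finite C" and "X \<subseteq> C" and "sum r1 X = f X"
    and "tight_levels X f r1 w" and "tight_levels (C - X) (contraction f X) r2 w"
    and "\<forall>i\<in>X. r1 i / w i \<le> lam" and "\<forall>i\<in>C - X. lam < r2 i / w i"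
  shows "tight_levels C f (\<lambda>i. if i \<in> X then r1 i else r2 i) w"
  unfolding tight_levels_def
proof
  fix c
  let ?r = "\<lambda>i. if i \<in> X then r1 i else r2 i"
  show "sum ?r {i \<in> C. ?r i / w i \<le> c} = f {i \<in> C. ?r i / w i \<le> c}"
  proof (cases "c \<le> lam")
    case True
    then have "{i \<in> C. ?r i / w i \<le> c} = {i \<in> X. r1 i / w i \<le> c}"
      using assms(2,7) by force
    moreover have "sum ?r {i \<in> X. r1 i / w i \<le> c} = sum r1 {i \<in> X. r1 i / w i \<le> c}"
      by (rule sum.cong) auto
    ultimately show ?thesis
      using tight_levelsD[OF assms(4)] by simp
  next
    case False
    define L where "L = {i \<in> C - X. r2 i / w i \<le> c}"
    have "{i \<in> C. ?r i / w i \<le> c} = X \<union> L"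
      unfolding L_def using assms(2,6) False by force
    moreover have "sum ?r (X \<union> L) = sum r1 X + sum r2 L"
    proof -
      have "finite X" "finite L"
        using assms(1,2) unfolding L_def by (auto intro: finite_subset)
      then have "sum ?r (X \<union> L) = sum ?r X + sum ?r L"
        by (intro sum.union_disjoint) (auto simp: L_def)
      also have "sum ?r X = sum r1 X"
        by (rule sum.cong) auto
      also have "sum ?r L = sum r2 L"
        unfolding L_def by (rule sum.cong) auto
      finally show ?thesis .
    qed
    moreover have "sum r2 L = f (L \<union> X) - f X"
      using tight_levelsD[OF assms(5)] unfolding L_def contraction_def by simp
    ultimately show ?thesis
      using assms(3) by (simp add: Un_commute)
  qed
qed

lemma tight_levels_ratio_le:
  assumes "finite X" and "\<forall>i\<in>X. w i > 0"
    and "tight_levels X f r w" and "sum r X = f X"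
    and "\<And>Y. Y \<subseteq> X \<Longrightarrow> f X - lam * sum w X \<le> f Y - lam * sum w Y"
  shows "\<forall>i\<in>X. r i / w i \<le> lam"
proof (rule ccontr)
  assume "\<not> (\<forall>i\<in>X. r i / w i \<le> lam)"
  define L where "L = {i \<in> X. r i / w i \<le> lam}"
  define U where "U = X - L"
  have "L \<subseteq> X" "U \<noteq> {}" "finite U"
    using \<open>\<not> (\<forall>i\<in>X. r i / w i \<le> lam)\<close> assms(1) unfolding L_def U_def by auto
  have "sum r U = f X - f L" "sum w U = sum w X - sum w L"
    using tight_levelsD[OF assms(3), of lam] assms(1,4) \<open>L \<subseteq> X\<close>
    unfolding U_def L_def by (simp_all add: sum_diff)
  then have "sum r U \<le> lam * sum w U"
    using assms(5)[OF \<open>L \<subseteq> X\<close>] by (simp add: right_diff_distrib)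
  moreover have "lam * sum w U < sum r U"
    unfolding sum_distrib_left
  proof (rule sum_strict_mono[OF \<open>finite U\<close> \<open>U \<noteq> {}\<close>])
    fix i assume "i \<in> U"
    then show "lam * w i < r i"
      using assms(2) unfolding U_def L_def by (auto simp: not_le pos_less_divide_eq)
  qed
  ultimately show False by simp
qed

lemma tight_levels_ratio_gt:
  assumes "\<forall>i\<in>D. w i > 0" and "tight_levels D g r w"
    and "\<And>L. L \<subseteq> D \<Longrightarrow> L \<noteq> {} \<Longrightarrow> lam * sum w L < g L"
  shows "\<forall>i\<in>D. lam < r i / w i"
proof (rule ccontr)
  assume "\<not> (\<forall>i\<in>D. lam < r i / w i)"
  define L where "L = {i \<in> D. r i / w i \<le> lam}"
  have "L \<subseteq> D" "L \<noteq> {}"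
    using \<open>\<not> (\<forall>i\<in>D. lam < r i / w i)\<close> unfolding L_def by auto
  have "g L = sum r L"
    using tight_levelsD[OF assms(2), of lam] unfolding L_def by simp
  also have "\<dots> \<le> lam * sum w L"
    unfolding sum_distrib_left
  proof (rule sum_mono)
    fix i assume "i \<in> L"
    then show "r i \<le> lam * w i"
      using assms(1) unfolding L_def by (auto simp: pos_divide_le_eq)
  qed
  finally show False
    using assms(3)[OF \<open>L \<subseteq> D\<close> \<open>L \<noteq> {}\<close>] by simp
qed

lemma scaled_weights_certificate:
  assumes "\<forall>i\<in>C. w i > 0" and "f {} = 0" and "f C = lam * sum w C"
    and "\<And>Y. Y \<subseteq> C \<Longrightarrow> lam * sum w Y \<le> f Y"
  shows "(\<lambda>i. lam * w i) \<in> region C f \<and> tight_levels C f (\<lambda>i. lam * w i) w"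
proof
  show "(\<lambda>i. lam * w i) \<in> region C f"
    using assms(3,4) unfolding region_iff by (simp add: sum_distrib_left)
  have "{i \<in> C. lam * w i / w i \<le> c} = (if lam \<le> c then C else {})" for c
    using assms(1) by auto
  then show "tight_levels C f (\<lambda>i. lam * w i) w"
    unfolding tight_levels_def using assms(2,3) by (simp add: sum_distrib_left)
qed

text \<open>Gluing step of SPLIT: if \<open>X\<close> is the maximal minimizer of \<open>f - \<lambda> w\<close>, certified
  vectors on \<open>X\<close> and on the contraction to \<open>C - X\<close> combine to one on \<open>C\<close>, because the
  maximality of \<open>X\<close> separates their rates per unit weight by the level \<open>\<lambda>\<close>.\<close>

lemma glue_certificate:
  assumes "finite C" and "\<forall>i\<in>C. w i > 0" and "submodular_on C f" and "X \<subseteq> C"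
    and min: "\<And>Y. Y \<subseteq> C \<Longrightarrow> f X - lam * sum w X \<le> f Y - lam * sum w Y"
    and max: "\<And>Y. Y \<subseteq> C \<Longrightarrow> f Y - lam * sum w Y = f X - lam * sum w X \<Longrightarrow> Y \<subseteq> X"
    and r1: "r1 \<in> region X f" "tight_levels X f r1 w"
    and r2: "r2 \<in> region (C - X) (contraction f X)" "tight_levels (C - X) (contraction f X) r2 w"
  shows "(\<lambda>i. if i \<in> X then r1 i else r2 i) \<in> region C f
    \<and> tight_levels C f (\<lambda>i. if i \<in> X then r1 i else r2 i) w"
proof
  show "(\<lambda>i. if i \<in> X then r1 i else r2 i) \<in> region C f"
    using region_glue[OF assms(1,3,4) r1(1) r2(1)] .
  have "finite X" "finite (C - X)"
    using assms(1,4) by (auto intro: finite_subset)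
  have "\<forall>i\<in>X. r1 i / w i \<le> lam"
    using \<open>finite X\<close> _ r1(2) region_sum_eq[OF r1(1)]
  proof (rule tight_levels_ratio_le)
    show "\<forall>i\<in>X. w i > 0" using assms(2,4) by blast
    show "f X - lam * sum w X \<le> f Y - lam * sum w Y" if "Y \<subseteq> X" for Y
      using min that assms(4) by blast
  qed
  moreover have "\<forall>i\<in>C - X. lam < r2 i / w i"
    using _ r2(2)
  proof (rule tight_levels_ratio_gt)
    show "\<forall>i\<in>C - X. w i > 0" using assms(2) by blast
    fix L assume L: "L \<subseteq> C - X" "L \<noteq> {}"
    then have "L \<union> X \<subseteq> C" "\<not> L \<union> X \<subseteq> X"
      using assms(4) by blast+
    then have "f (L \<union> X) - lam * sum w (L \<union> X) \<noteq> f X - lam * sum w X"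
      using max by blast
    moreover have "f X - lam * sum w X \<le> f (L \<union> X) - lam * sum w (L \<union> X)"
      using min L assms(4) by blast
    moreover have "sum w (L \<union> X) = sum w L + sum w X"
      using L \<open>finite X\<close> \<open>finite (C - X)\<close> by (intro sum.union_disjoint) (auto intro: finite_subset)
    ultimately show "lam * sum w L < contraction f X L"
      unfolding contraction_def by (simp add: distrib_left)
  qed
  ultimately show "tight_levels C f (\<lambda>i. if i \<in> X then r1 i else r2 i) w"
    using tight_levels_glue[OF assms(1,4) region_sum_eq[OF r1(1)] r1(2) r2(2)] by blast
qed

lemma split_aux_Suc:
  "split_aux (Suc n) C f w =
    (let lam = f C / sum w C;
         X = max_minimizer C (\<lambda>Y. f Y - lam * sum w Y);
         a = f X / sum w X
     in if X = C then (\<lambda>i. lam * w i)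
        else (\<lambda>i. if i \<in> X then split_aux n X f w i
                  else a * w i + split_aux n (C - X) (\<lambda>Y. contraction f X Y - a * sum w Y) w i))"
proof -
  have "(\<lambda>Y. f (Y \<union> X) - f X * (sum w Y / sum w X + 1))
      = (\<lambda>Y. contraction f X Y - f X / sum w X * sum w Y)" for X
    by (simp add: contraction_def fun_eq_iff distrib_left)
  then show ?thesis
    unfolding split_aux.simps setsum_eq_sum Let_def by (simp only:)
qed

lemma max_minimizer_nonempty:
  assumes "finite C" and "submodular_on C h" and "h {} = 0" and "h C = 0"
    and "max_minimizer C h \<noteq> C"
  shows "max_minimizer C h \<noteq> {}"
proof
  assume "max_minimizer C h = {}"
  then have "h C = h (max_minimizer C h)"
    using max_minimizer(2)[OF assms(1,2), of C] assms(3,4) by simp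
  then show False
    using max_minimizer[OF assms(1,2)] assms(5) by blast
qed

lemma split_aux_certificate:
  assumes "card C \<le> n" and "finite C" and "\<forall>i\<in>C. w i > 0"
    and "submodular_on C f" and "f {} = 0"
  shows "split_aux n C f w \<in> region C f \<and> tight_levels C f (split_aux n C f w) w"
  using assms
proof (induction n arbitrary: C f)
  case 0
  then show ?case by (simp add: region_iff tight_levels_def)
next
  case (Suc n C f)
  note fin = \<open>finite C\<close> and w_pos = \<open>\<forall>i\<in>C. w i > 0\<close> and submod = \<open>submodular_on C f\<close>
  define lam where "lam = f C / sum w C"
  define h where "h = (\<lambda>Y. f Y - lam * sum w Y)"
  define X where "X = max_minimizer C h"
  define a where "a = f X / sum w X"
  define g where "g = (\<lambda>Y. contraction f X Y - a * sum w Y)"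
  have h_submod: "submodular_on C h"
    unfolding h_def by (rule submodular_on_diff_scaled_sum[OF fin submod])
  note X = max_minimizer[OF fin h_submod, folded X_def]
  have h_empty: "h {} = 0"
    using \<open>f {} = 0\<close> by (simp add: h_def)
  have h_C: "h C = 0"
  proof (cases "C = {}")
    case False
    then have "sum w C > 0" using fin w_pos by (intro sum_pos) auto
    then show ?thesis by (simp add: h_def lam_def)
  qed (simp add: h_empty)
  show ?case
  proof (cases "X = C")
    case True
    have "lam * sum w Y \<le> f Y" if "Y \<subseteq> C" for Y
      using X(2)[OF that] h_C True by (simp add: h_def)
    then show ?thesis
      unfolding split_aux_Suc Let_def lam_def[symmetric] h_def[symmetric] X_def[symmetric]
      using scaled_weights_certificate[OF w_pos, where f = f and lam = lam] \<open>f {} = 0\<close> h_C True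
      by (simp add: h_def)
  next
    case False
    then have "X \<noteq> {}"
      using max_minimizer_nonempty[OF fin h_submod h_empty h_C] by (simp add: X_def)
    then have "X \<subset> C" "C - X \<subset> C"
      using X(1) False by auto
    then have "card X < card C" "card (C - X) < card C"
      using psubset_card_mono[OF fin] by blast+
    then have "card X \<le> n" "card (C - X) \<le> n"
      using Suc.prems(1) by linarith+
    moreover have "finite X" "finite (C - X)"
      using fin X(1) by (auto intro: finite_subset)
    moreover have "submodular_on (C - X) g"
      unfolding g_def
      by (intro submodular_on_diff_scaled_sum submodular_on_contraction submod X(1) \<open>finite (C - X)\<close>)
    ultimately have r1: "split_aux n X f w \<in> region X f \<and> tight_levels X f (split_aux n X f w) w"
      and "split_aux n (C - X) g w \<in> region (C - X) g
        \<and> tight_levels (C - X) g (split_aux n (C - X) g w) w"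
      using Suc.IH submodular_on_subset[OF submod X(1)] \<open>f {} = 0\<close> w_pos X(1)
      by (auto simp: g_def contraction_def)
    then have r2: "(\<lambda>i. a * w i + split_aux n (C - X) g w i) \<in> region (C - X) (contraction f X)
        \<and> tight_levels (C - X) (contraction f X) (\<lambda>i. a * w i + split_aux n (C - X) g w i) w"
      unfolding g_def using w_pos by (auto intro: region_add_scaled tight_levels_add_scaled)
    define r where "r = (\<lambda>i. if i \<in> X then split_aux n X f w i else a * w i + split_aux n (C - X) g w i)"
    have "r \<in> region C f \<and> tight_levels C f r w"
      unfolding r_def
    proof (rule glue_certificate[OF fin w_pos submod X(1)])
      show "f X - lam * sum w X \<le> f Y - lam * sum w Y" if "Y \<subseteq> C" for Y
        using X(2)[OF that] by (simp add: h_def)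
      show "Y \<subseteq> X" if "Y \<subseteq> C" "f Y - lam * sum w Y = f X - lam * sum w X" for Y
        using X(3) that by (simp add: h_def)
    qed (use r1 r2 in blast)+
    then show ?thesis
      unfolding split_aux_Suc Let_def lam_def[symmetric] h_def[symmetric] X_def[symmetric]
        a_def[symmetric] g_def[symmetric]
      using False by (simp add: r_def)
  qed
qed

section \<open>Tight sublevel sets certify optimality\<close>

lemma sublevel_sums_nonpos_strict_sublevel:
  fixes y d :: "'i \<Rightarrow> real"
  assumes "finite C" and "\<And>t. sum d {i \<in> C. y i \<le> t} \<le> 0"
  shows "sum d {i \<in> {i \<in> C. y i < M}. y i \<le> t} \<le> 0"
proof (cases "{i \<in> C. y i < M} = {}")
  case False
  define M' where "M' = Max (y ` {i \<in> C. y i < M})"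
  have "M' \<in> y ` {i \<in> C. y i < M}" "\<forall>i \<in> {i \<in> C. y i < M}. y i \<le> M'"
    unfolding M'_def using assms(1) False by auto
  then have "{i \<in> {i \<in> C. y i < M}. y i \<le> t} = {i \<in> C. y i \<le> min t M'}"
    by force
  then show ?thesis
    using assms(2)[of "min t M'"] by simp
next
  case True
  then have "{i \<in> {i \<in> C. y i < M}. y i \<le> t} = {}"
    by blast
  then show ?thesis by (simp only: sum.empty order.refl)
qed

text \<open>Summation by parts: peeling off the top level set of \<open>y\<close> reduces to a smaller set.\<close>

lemma sum_mult_ge_of_sublevel_sums_nonpos:
  fixes y d :: "'i \<Rightarrow> real"
  assumes "finite C" and "\<And>t. sum d {i \<in> C. y i \<le> t} \<le> 0" and "\<forall>i\<in>C. y i \<le> c"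
  shows "c * sum d C \<le> (\<Sum>i\<in>C. y i * d i)"
  using assms
proof (induction C arbitrary: c rule: finite_psubset_induct)
  case (psubset C)
  show ?case
  proof (cases "C = {}")
    case False
    define M where "M = Max (y ` C)"
    define C' where "C' = {i \<in> C. y i < M}"
    have "M \<in> y ` C"
      unfolding M_def using psubset.hyps(1) False by (intro Max_in) auto
    then obtain j where "j \<in> C" "y j = M" by blast
    have y_le_M: "y i \<le> M" if "i \<in> C" for i
      unfolding M_def using psubset.hyps(1) that by simp
    have "C' \<subset> C"
      unfolding C'_def using \<open>j \<in> C\<close> \<open>y j = M\<close> by blast
    have "sum d {i \<in> C'. y i \<le> t} \<le> 0" for t
      unfolding C'_def using psubset.hyps(1) psubset.prems(1)
      by (rule sublevel_sums_nonpos_strict_sublevel)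
    moreover have "\<forall>i\<in>C'. y i \<le> M"
      unfolding C'_def by simp
    ultimately have IH: "M * sum d C' \<le> (\<Sum>i\<in>C'. y i * d i)"
      by (rule psubset.IH[OF \<open>C' \<subset> C\<close>])
    have top: "(\<Sum>i\<in>C - C'. y i * d i) = M * sum d (C - C')"
      unfolding sum_distrib_left C'_def using y_le_M by (intro sum.cong) (auto intro: antisym)
    have "sum g C = sum g (C - C') + sum g C'" for g :: "'i \<Rightarrow> real"
      using \<open>C' \<subset> C\<close> psubset.hyps(1) by (intro sum.subset_diff) auto
    then have "M * sum d C \<le> (\<Sum>i\<in>C. y i * d i)"
      using IH top by (simp add: distrib_left)
    moreover have "c * sum d C \<le> M * sum d C"
    proof (rule mult_right_mono_neg)
      show "M \<le> c"
        using psubset.prems(2) \<open>j \<in> C\<close> \<open>y j = M\<close> by blast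
      have "{i \<in> C. y i \<le> c} = C"
        using psubset.prems(2) by auto
      then show "sum d C \<le> 0"
        using psubset.prems(1)[of c] by simp
    qed
    ultimately show ?thesis by linarith
  qed simp
qed

lemma tight_levels_quadratic_optimal:
  fixes r r' w :: "'i \<Rightarrow> real"
  assumes "finite V" and "\<forall>i\<in>V. w i > 0"
    and "r \<in> region V f" and "tight_levels V f r w" and "r' \<in> region V f"
  shows "(\<Sum>i\<in>V. (r i)\<^sup>2 / w i) + (\<Sum>i\<in>V. (r' i - r i)\<^sup>2 / w i) \<le> (\<Sum>i\<in>V. (r' i)\<^sup>2 / w i)"
proof -
  define d where "d i = r' i - r i" for i
  have "sum d {i \<in> V. r i / w i \<le> t} \<le> 0" for t
    using regionD[OF assms(5), of "{i \<in> V. r i / w i \<le> t}"] tight_levelsD[OF assms(4), of t]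
    by (simp add: d_def sum_subtractf)
  moreover have "\<forall>i\<in>V. r i / w i \<le> Max (insert 0 ((\<lambda>i. r i / w i) ` V))"
    using assms(1) by simp
  ultimately have "Max (insert 0 ((\<lambda>i. r i / w i) ` V)) * sum d V \<le> (\<Sum>i\<in>V. r i / w i * d i)"
    by (rule sum_mult_ge_of_sublevel_sums_nonpos[OF assms(1)])
  moreover have "sum d V = 0"
    using region_sum_eq[OF assms(3)] region_sum_eq[OF assms(5)] by (simp add: d_def sum_subtractf)
  ultimately have cross: "0 \<le> (\<Sum>i\<in>V. r i / w i * d i)" by simp
  have "(r' i)\<^sup>2 = (r i)\<^sup>2 + (d i)\<^sup>2 + 2 * (r i * d i)" for i
    by (simp add: d_def power2_eq_square algebra_simps)
  then have "(r' i)\<^sup>2 / w i = (r i)\<^sup>2 / w i + (d i)\<^sup>2 / w i + 2 * (r i / w i * d i)" for i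
    by (simp add: add_divide_distrib)
  then have "(\<Sum>i\<in>V. (r' i)\<^sup>2 / w i)
      = (\<Sum>i\<in>V. (r i)\<^sup>2 / w i) + (\<Sum>i\<in>V. (d i)\<^sup>2 / w i) + 2 * (\<Sum>i\<in>V. r i / w i * d i)"
    by (simp add: sum.distrib sum_distrib_left cong: sum.cong)
  with cross show ?thesis unfolding d_def by linarith
qed

lemma tight_levels_unique_minimizer:
  fixes r r' w :: "'i \<Rightarrow> real"
  assumes "finite V" and "\<forall>i\<in>V. w i > 0"
    and "r \<in> region V f" and "tight_levels V f r w" and "r' \<in> region V f"
  shows "(\<Sum>i\<in>V. (r i)\<^sup>2 / w i) \<le> (\<Sum>i\<in>V. (r' i)\<^sup>2 / w i)"
    and "\<exists>i\<in>V. r' i \<noteq> r i \<Longrightarrow> (\<Sum>i\<in>V. (r i)\<^sup>2 / w i) < (\<Sum>i\<in>V. (r' i)\<^sup>2 / w i)"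
proof -
  note pythagoras = tight_levels_quadratic_optimal[OF assms]
  have "0 \<le> (\<Sum>i\<in>V. (r' i - r i)\<^sup>2 / w i)"
    using assms(2) by (intro sum_nonneg) (simp add: less_imp_le)
  with pythagoras show "(\<Sum>i\<in>V. (r i)\<^sup>2 / w i) \<le> (\<Sum>i\<in>V. (r' i)\<^sup>2 / w i)"
    by linarith
  assume "\<exists>i\<in>V. r' i \<noteq> r i"
  then obtain i where "i \<in> V" "r' i \<noteq> r i" by blast
  then have "0 < (\<Sum>i\<in>V. (r' i - r i)\<^sup>2 / w i)"
    using assms(2) by (intro sum_pos2[OF assms(1) \<open>i \<in> V\<close>]) (simp_all add: less_imp_le)
  with pythagoras show "(\<Sum>i\<in>V. (r i)\<^sup>2 / w i) < (\<Sum>i\<in>V. (r' i)\<^sup>2 / w i)"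
    by linarith
qed

theorem theorem1:
  fixes V :: "'i set" and P :: "('i \<Rightarrow> 'a) pmf" and w :: "'i \<Rightarrow> real"
  assumes "finite V" and "V \<noteq> {}"
    and "finite (set_pmf P)"
    and "\<forall>i\<in>V. w i > 0"
  shows "SPLIT V (entropy_fun P) w \<in> region V (entropy_fun P)
    \<and> (\<forall>r \<in> region V (entropy_fun P).
          (\<Sum>i\<in>V. (SPLIT V (entropy_fun P) w i)\<^sup>2 / w i) \<le> (\<Sum>i\<in>V. (r i)\<^sup>2 / w i))
    \<and> (\<forall>r \<in> region V (entropy_fun P). (\<exists>i\<in>V. r i \<noteq> SPLIT V (entropy_fun P) w i) \<longrightarrow>
          (\<Sum>i\<in>V. (SPLIT V (entropy_fun P) w i)\<^sup>2 / w i) < (\<Sum>i\<in>V. (r i)\<^sup>2 / w i))"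
proof -
  have "submodular_on V (entropy_fun P)"
    unfolding submodular_on_def using entropy_fun_submodular[OF assms(3)] by blast
  then have "SPLIT V (entropy_fun P) w \<in> region V (entropy_fun P)
      \<and> tight_levels V (entropy_fun P) (SPLIT V (entropy_fun P) w) w"
    unfolding SPLIT_def
    by (rule split_aux_certificate[where f = "entropy_fun P", OF order_refl assms(1,4) _
          entropy_fun_empty[OF assms(3)]])
  then show ?thesis
    using tight_levels_unique_minimizer[OF assms(1,4)] by blast
qed

end
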